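(* Suppose $\mathit{Act}=\{a\}$. Then $\mathcal{E}_{\omega,1}'=\{A1,A2,A3,A4,V1_\omega,O1\}$ is complete for $\simeq_\omega$ over open monitors: for all monitors $m,n$, if $m\simeq_\omega n$ then $\mathcal{E}_{\omega,1}'\vdash m=n$.
   Context: Monitors: terms $m,n ::= v \mid a.m \mid m+n \mid x$ over the action set $\mathit{Act}$ and variables $x$, verdicts $v::=\mathit{end}\mid\mathit{yes}\mid\mathit{no}$. Semantics: $\xrightarrow{\alpha}$ ($\alpha\in\mathit{Act}\cup\{\tau\}$) is the least relation with $a.m\xrightarrow{a}m$; $m\xrightarrow{\alpha}m'$ implies $m+n\xrightarrow{\alpha}m'$ and $n+m\xrightarrow{\alpha}m'$; $v\xrightarrow{\alpha}v$ for verdicts $v$. Weak transitions: $m\xRightarrow{\varepsilon}m'$ iff $m(\xrightarrow{\tau})^*m'$; $m\xRightarrow{a}m'$ iff $m\xRightarrow{\varepsilon}\xrightarrow{a}\xRightarrow{\varepsilon}m'$; $m\xRightarrow{as'}m'$ ($s'\ne\varepsilon$) iff $m\xRightarrow{a}m_1\xRightarrow{s'}m'$. For closed $m$, $L_a(m)=\{s\mid m\xRightarrow{s}\mathit{yes}\}$, $L_r(m)=\{s\mid m\xRightarrow{s}\mathit{no}\}$; closed $m\simeq_\omega n$ iff $L_a(m)\cdot\mathit{Act}^\omega=L_a(n)\cdot\mathit{Act}^\omega$ and $L_r(m)\cdot\mathit{Act}^\omega=L_r(n)\cdot\mathit{Act}^\omega$; for open terms iff $\sigma(m)\simeq_\omega\sigma(n)$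 for all closed substitutions $\sigma$. $\mathcal{E}\vdash m=n$ denotes derivability by reflexivity, symmetry, transitivity, substitution and congruence for $a.\_$ and $+$. Axioms: (A1) $x+y=y+x$; (A2) $x+(y+z)=(x+y)+z$; (A3) $x+x=x$; (A4) $x+\mathit{end}=x$; ($V1_\omega$) $x=a.x$; (O1) $\mathit{yes}+\mathit{no}=\mathit{yes}+\mathit{no}+x$. *)

theory Defs
  imports Main
begin

datatype verdict = End | Yes | No

datatype 'a mon = V verdict | Pre 'a "'a mon" | Plus "'a mon" "'a mon" | Var nat

(* Transitions labelled by Some a (action a) or None (tau). *)

inductive step :: "'a mon \<Rightarrow> 'a option \<Rightarrow> 'a mon \<Rightarrow> bool" where
  pre: "step (Pre a m) (Some a) m"
| plusL: "step m \<alpha> m' \<Longrightarrow> step (Plus m n) \<alpha> m'"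
| plusR: "step m \<alpha> m' \<Longrightarrow> step (Plus n m) \<alpha> m'"
| verd: "step (V v) \<alpha> (V v)"

definition weak_eps :: "'a mon \<Rightarrow> 'a mon \<Rightarrow> bool" where
  "weak_eps = (\<lambda>m m'. step m None m')\<^sup>*\<^sup>*"

definition weak_act :: "'a mon \<Rightarrow> 'a \<Rightarrow> 'a mon \<Rightarrow> bool" where
  "weak_act m a m' \<longleftrightarrow> (\<exists>m1 m2. weak_eps m m1 \<and> step m1 (Some a) m2 \<and> weak_eps m2 m')"

fun weak_tr :: "'a mon \<Rightarrow> 'a list \<Rightarrow> 'a mon \<Rightarrow> bool" where
  "weak_tr m [] m' = weak_eps m m'"
| "weak_tr m [a] m' = weak_act m a m'"
| "weak_tr m (a # b # s) m' = (\<exists>m1. weak_act m a m1 \<and> weak_tr m1 (b # s) m')"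

fun vars :: "'a mon \<Rightarrow> nat set" where
  "vars (V v) = {}"
| "vars (Pre a m) = vars m"
| "vars (Plus m n) = vars m \<union> vars n"
| "vars (Var x) = {x}"

definition closed :: "'a mon \<Rightarrow> bool" where
  "closed m \<longleftrightarrow> vars m = {}"

definition L_acc :: "'a mon \<Rightarrow> 'a list set" where
  "L_acc m = {s. weak_tr m s (V Yes)}"

definition L_rej :: "'a mon \<Rightarrow> 'a list set" where
  "L_rej m = {s. weak_tr m s (V No)}"

(* L <cdot> Act^<omega>: infinite words (nat <Rightarrow> 'a) having a prefix in L. *)
definition omega_ext :: "'a list set \<Rightarrow> (nat \<Rightarrow> 'a) set" where
  "omega_ext L = {w. \<exists>s\<in>L. \<forall>i<length s. w i = s ! i}"

definition closed_eq :: "'a mon \<Rightarrow> 'a mon \<Rightarrow> bool" where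
  "closed_eq m n \<longleftrightarrow> omega_ext (L_acc m) = omega_ext (L_acc n)
                     \<and> omega_ext (L_rej m) = omega_ext (L_rej n)"

fun subst :: "(nat \<Rightarrow> 'a mon) \<Rightarrow> 'a mon \<Rightarrow> 'a mon" where
  "subst \<sigma> (V v) = V v"
| "subst \<sigma> (Pre a m) = Pre a (subst \<sigma> m)"
| "subst \<sigma> (Plus m n) = Plus (subst \<sigma> m) (subst \<sigma> n)"
| "subst \<sigma> (Var x) = \<sigma> x"

definition omega_equiv :: "'a mon \<Rightarrow> 'a mon \<Rightarrow> bool" where
  "omega_equiv m n \<longleftrightarrow>
     (\<forall>\<sigma>. (\<forall>x. closed (\<sigma> x)) \<longrightarrow> closed_eq (subst \<sigma> m) (subst \<sigma> n))"

inductive derivable :: "('a mon \<times> 'a mon) set \<Rightarrow> 'a mon \<Rightarrow> 'a mon \<Rightarrow> bool"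
  for E where
  ax: "(m, n) \<in> E \<Longrightarrow> derivable E m n"
| refl: "derivable E m m"
| sym: "derivable E m n \<Longrightarrow> derivable E n m"
| trans: "derivable E m n \<Longrightarrow> derivable E n k \<Longrightarrow> derivable E m k"
| subst: "derivable E m n \<Longrightarrow> derivable E (subst \<sigma> m) (subst \<sigma> n)"
| cong_pre: "derivable E m n \<Longrightarrow> derivable E (Pre a m) (Pre a n)"
| cong_plus: "derivable E m n \<Longrightarrow> derivable E m' n' \<Longrightarrow> derivable E (Plus m m') (Plus n n')"

(* The axiom system E'_{<omega>,1} = {A1,A2,A3,A4,V1_<omega>,O1}, variables x,y,z = 0,1,2. *)
definition E_omega1' :: "('a mon \<times> 'a mon) set" where
  "E_omega1' =
    {(Plus (Var 0) (Var 1), Plus (Var 1) (Var 0)),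
     (Plus (Var 0) (Plus (Var 1) (Var 2)), Plus (Plus (Var 0) (Var 1)) (Var 2)),
     (Plus (Var 0) (Var 0), Var 0),
     (Plus (Var 0) (V End), Var 0),
     (Plus (V Yes) (V No), Plus (Plus (V Yes) (V No)) (Var 0))}
    \<union> {(Var 0, Pre b (Var 0)) | b. True}"

end

theory Submission
  imports Defs
begin

text \<open>Call the verdicts and variables occurring in a monitor its atoms. Using A1--A4 and
  V1\<open>\<^sub>\<omega>\<close>, a monitor is provably equal to any other with the same atoms up to \<open>end\<close>, and by O1
  every monitor having both \<open>yes\<close> and \<open>no\<close> among its atoms equals \<open>yes + no\<close>. Semantically,
  a verdict is reachable from a monitor exactly when it is one of its atoms, so \<open>\<simeq>\<^sub>\<omega>\<close>
  determines which of \<open>yes\<close>, \<open>no\<close> are atoms; substituting \<open>yes\<close> or \<open>no\<close> for a single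
  variable and \<open>end\<close> for all others detects the variable atoms as well, unless the monitor
  already has both \<open>yes\<close> and \<open>no\<close>.\<close>

abbreviation provable :: "'a mon \<Rightarrow> 'a mon \<Rightarrow> bool" where
  "provable \<equiv> derivable E_omega1'"

lemmas [trans] = derivable.trans

lemma derivable_axiom_instance: "(l, r) \<in> E \<Longrightarrow> derivable E (subst \<sigma> l) (subst \<sigma> r)"
  by (rule derivable.subst[OF derivable.ax])

lemma provable_plus_commute: "provable (Plus x y) (Plus y x)"
  using derivable_axiom_instance[of "Plus (Var 0) (Var 1)" "Plus (Var 1) (Var 0)" E_omega1'
      "\<lambda>i. if i = 0 then x else y"]
  by (simp add: E_omega1'_def)

lemma provable_plus_assoc: "provable (Plus x (Plus y z)) (Plus (Plus x y) z)"
  using derivable_axiom_instance[of "Plus (Var 0) (Plus (Var 1) (Var 2))"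
      "Plus (Plus (Var 0) (Var 1)) (Var 2)" E_omega1'
      "\<lambda>i. if i = 0 then x else if i = 1 then y else z"]
  by (simp add: E_omega1'_def)

lemma provable_plus_idem: "provable (Plus x x) x"
  using derivable_axiom_instance[of "Plus (Var 0) (Var 0)" "Var 0" E_omega1' "\<lambda>_. x"]
  by (simp add: E_omega1'_def)

lemma provable_plus_End: "provable (Plus x (V End)) x"
  using derivable_axiom_instance[of "Plus (Var 0) (V End)" "Var 0" E_omega1' "\<lambda>_. x"]
  by (simp add: E_omega1'_def)

lemma provable_Pre: "provable (Pre b x) x"
  using derivable_axiom_instance[of "Var 0" "Pre b (Var 0)" E_omega1' "\<lambda>_. x"]
  by (auto simp add: E_omega1'_def intro: derivable.sym)

lemma provable_Yes_No_plus: "provable (Plus (Plus (V Yes) (V No)) x) (Plus (V Yes) (V No))"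
  using derivable_axiom_instance[of "Plus (V Yes) (V No)" "Plus (Plus (V Yes) (V No)) (Var 0)"
      E_omega1' "\<lambda>_. x"]
  by (simp add: E_omega1'_def derivable.sym)

fun atoms :: "'a mon \<Rightarrow> 'a mon set" where
  "atoms (V v) = {V v}"
| "atoms (Pre b m) = atoms m"
| "atoms (Plus m n) = atoms m \<union> atoms n"
| "atoms (Var x) = {Var x}"

lemma atom_is_verdict_or_Var: "l \<in> atoms m \<Longrightarrow> (\<exists>v. l = V v) \<or> (\<exists>x. l = Var x)"
  by (induction m) auto

lemma provable_plus_absorb_atom: "l \<in> atoms m \<Longrightarrow> provable (Plus m l) m"
proof (induction m)
  case (V v)
  then show ?case by (simp add: provable_plus_idem)
next
  case (Var x)
  then show ?case by (simp add: provable_plus_idem)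
next
  case (Pre b m)
  have "provable (Plus (Pre b m) l) (Plus m l)"
    by (rule derivable.cong_plus[OF provable_Pre derivable.refl])
  also have "provable (Plus m l) m"
    using Pre by simp
  also have "provable m (Pre b m)"
    by (rule derivable.sym[OF provable_Pre])
  finally show ?case .
next
  case (Plus m1 m2)
  have "provable (Plus (Plus m1 m2) l) (Plus m1 (Plus m2 l))"
    by (rule derivable.sym[OF provable_plus_assoc])
  show ?case
  proof (cases "l \<in> atoms m1")
    case True
    note \<open>provable (Plus (Plus m1 m2) l) (Plus m1 (Plus m2 l))\<close>
    also have "provable (Plus m1 (Plus m2 l)) (Plus m1 (Plus l m2))"
      by (rule derivable.cong_plus[OF derivable.refl provable_plus_commute])
    also have "provable (Plus m1 (Plus l m2)) (Plus (Plus m1 l) m2)"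
      by (rule provable_plus_assoc)
    also have "provable (Plus (Plus m1 l) m2) (Plus m1 m2)"
      using Plus.IH(1) True by (simp add: derivable.cong_plus derivable.refl)
    finally show ?thesis .
  next
    case False
    note \<open>provable (Plus (Plus m1 m2) l) (Plus m1 (Plus m2 l))\<close>
    also have "provable (Plus m1 (Plus m2 l)) (Plus m1 m2)"
      using Plus.IH(2) Plus.prems False by (simp add: derivable.cong_plus derivable.refl)
    finally show ?thesis .
  qed
qed

lemma provable_plus_absorb: "atoms n \<subseteq> insert (V End) (atoms m) \<Longrightarrow> provable (Plus m n) m"
proof (induction n)
  case (V v)
  then show ?case
    by (cases "v = End") (auto simp: provable_plus_End provable_plus_absorb_atom)
next
  case (Var x)
  then show ?case by (simp add: provable_plus_absorb_atom)
next
  case (Pre b n)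
  have "provable (Plus m (Pre b n)) (Plus m n)"
    by (rule derivable.cong_plus[OF derivable.refl provable_Pre])
  also have "provable (Plus m n) m"
    using Pre by simp
  finally show ?case .
next
  case (Plus n1 n2)
  have "provable (Plus m (Plus n1 n2)) (Plus (Plus m n1) n2)"
    by (rule provable_plus_assoc)
  also have "provable (Plus (Plus m n1) n2) (Plus m n2)"
    using Plus by (simp add: derivable.cong_plus derivable.refl)
  also have "provable (Plus m n2) m"
    using Plus by simp
  finally show ?case .
qed

lemma provable_if_atoms_eq:
  assumes "atoms m - {V End} = atoms n - {V End}"
  shows "provable m n"
proof -
  have "provable m (Plus m n)"
    by (rule derivable.sym, rule provable_plus_absorb) (use assms in blast)
  also have "provable (Plus m n) (Plus n m)"
    by (rule provable_plus_commute)
  also have "provable (Plus n m) n"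
    using assms by (intro provable_plus_absorb) blast
  finally show ?thesis .
qed

lemma provable_Yes_No_if_atoms:
  assumes "V Yes \<in> atoms m" and "V No \<in> atoms m"
  shows "provable m (Plus (V Yes) (V No))"
proof -
  have "provable m (Plus m (Plus (V Yes) (V No)))"
    by (rule derivable.sym, rule provable_plus_absorb) (use assms in auto)
  also have "provable (Plus m (Plus (V Yes) (V No))) (Plus (Plus (V Yes) (V No)) m)"
    by (rule provable_plus_commute)
  also have "provable (Plus (Plus (V Yes) (V No)) m) (Plus (V Yes) (V No))"
    by (rule provable_Yes_No_plus)
  finally show ?thesis .
qed

lemma step_atoms: "step c \<alpha> c' \<Longrightarrow> atoms c' \<subseteq> atoms c"
  by (induction rule: step.induct) auto

lemma weak_eps_atoms: "weak_eps c c' \<Longrightarrow> atoms c' \<subseteq> atoms c"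
  unfolding weak_eps_def by (induction rule: rtranclp_induct) (auto dest: step_atoms)

lemma weak_act_atoms: "weak_act c b c' \<Longrightarrow> atoms c' \<subseteq> atoms c"
  unfolding weak_act_def by (blast dest: weak_eps_atoms step_atoms)

lemma weak_tr_atoms: "weak_tr c s c' \<Longrightarrow> atoms c' \<subseteq> atoms c"
  by (induction c s c' rule: weak_tr.induct) (auto dest: weak_eps_atoms weak_act_atoms)

lemma weak_act_tau_Cons: "step c None c' \<Longrightarrow> weak_act c' b t \<Longrightarrow> weak_act c b t"
  unfolding weak_act_def weak_eps_def by (blast intro: converse_rtranclp_into_rtranclp)

lemma weak_tr_tau_Cons: "step c None c' \<Longrightarrow> weak_tr c' s t \<Longrightarrow> weak_tr c s t"
  by (cases s rule: remdups_adj.cases)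
    (auto simp: weak_eps_def intro: converse_rtranclp_into_rtranclp weak_act_tau_Cons)

lemma weak_tr_act_Cons: "step c (Some b) c' \<Longrightarrow> weak_tr c' s t \<Longrightarrow> weak_tr c (b # s) t"
  by (cases s) (auto simp: weak_act_def weak_eps_def)

text \<open>At \<open>v + n\<close> the transition is the \<open>\<tau>\<close>-loop of the verdict \<open>v\<close>, taken through \<open>+\<close>.\<close>

lemma step_towards_verdict:
  assumes "V v \<in> atoms c" and "c \<noteq> V v"
  shows "\<exists>\<alpha> c'. step c \<alpha> c' \<and> V v \<in> atoms c' \<and> size c' < size c"
  using assms
proof (induction c)
  case (Pre b c)
  then show ?case by (auto intro: step.pre)
next
  case (Plus c1 c2)
  consider "V v \<in> atoms c1" | "V v \<in> atoms c2"
    using Plus.prems by auto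
  then show ?case
  proof cases
    case 1
    then obtain \<alpha> c' where "step c1 \<alpha> c'" "V v \<in> atoms c'" "size c' \<le> size c1"
      using Plus.IH(1) by (cases "c1 = V v") (force intro: step.verd)+
    then show ?thesis by (intro exI[of _ \<alpha>] exI[of _ c']) (simp add: step.plusL)
  next
    case 2
    then obtain \<alpha> c' where "step c2 \<alpha> c'" "V v \<in> atoms c'" "size c' \<le> size c2"
      using Plus.IH(2) by (cases "c2 = V v") (force intro: step.verd)+
    then show ?thesis by (intro exI[of _ \<alpha>] exI[of _ c']) (simp add: step.plusR)
  qed
qed auto

lemma reachable_verdict_iff: "(\<exists>s. weak_tr c s (V v)) \<longleftrightarrow> V v \<in> atoms c"
proof
  show "\<exists>s. weak_tr c s (V v)" if "V v \<in> atoms c"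
    using that
  proof (induction "size c" arbitrary: c rule: less_induct)
    case less
    show ?case
    proof (cases "c = V v")
      case True
      then show ?thesis by (intro exI[of _ "[]"]) (simp add: weak_eps_def)
    next
      case False
      then obtain \<alpha> c' where "step c \<alpha> c'" "V v \<in> atoms c'" "size c' < size c"
        using step_towards_verdict less.prems by blast
      moreover from calculation obtain s where "weak_tr c' s (V v)"
        using less.hyps by blast
      ultimately show ?thesis
        by (cases \<alpha>) (auto intro: weak_tr_tau_Cons weak_tr_act_Cons)
    qed
  qed
qed (auto dest: weak_tr_atoms)

lemma omega_ext_eq_empty_iff: "omega_ext L = {} \<longleftrightarrow> L = {}"
proof
  assume "omega_ext L = {}"
  moreover have "(\<lambda>i. s ! i) \<in> omega_ext L" if "s \<in> L" for s
    using that by (auto simp: omega_ext_def)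
  ultimately show "L = {}" by blast
qed (simp add: omega_ext_def)

lemma closed_eq_verdict_atoms:
  assumes "closed_eq c d" and "v \<in> {Yes, No}"
  shows "V v \<in> atoms c \<longleftrightarrow> V v \<in> atoms d"
proof -
  have "L_acc c = {} \<longleftrightarrow> L_acc d = {}" "L_rej c = {} \<longleftrightarrow> L_rej d = {}"
    using assms(1) by (metis closed_eq_def omega_ext_eq_empty_iff)+
  then show ?thesis
    using assms(2) reachable_verdict_iff[of c v] reachable_verdict_iff[of d v]
    by (auto simp: L_acc_def L_rej_def)
qed

text \<open>For \<open>v = End\<close> this substitution erases all variables.\<close>

definition single_verdict :: "nat \<Rightarrow> verdict \<Rightarrow> nat \<Rightarrow> 'a mon" where
  "single_verdict x v = (\<lambda>i. if i = x then V v else V End)"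

lemma atoms_subst_single_verdict:
  "w \<noteq> End \<Longrightarrow> V w \<in> atoms (subst (single_verdict x v) m) \<longleftrightarrow>
     V w \<in> atoms m \<or> (w = v \<and> Var x \<in> atoms m)"
  by (induction m) (auto simp: single_verdict_def)

lemma omega_equiv_atoms:
  assumes "omega_equiv m n"
  shows "(V Yes \<in> atoms m \<and> V No \<in> atoms m \<and> V Yes \<in> atoms n \<and> V No \<in> atoms n)
    \<or> atoms m - {V End} = atoms n - {V End}"
proof -
  have probe: "V w \<in> atoms m \<or> (w = v \<and> Var x \<in> atoms m) \<longleftrightarrow>
      V w \<in> atoms n \<or> (w = v \<and> Var x \<in> atoms n)" if "w \<in> {Yes, No}" for x v w
  proof -
    have "closed_eq (subst (single_verdict x v) m) (subst (single_verdict x v) n)"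
      using assms by (simp add: omega_equiv_def closed_def single_verdict_def)
    then have "V w \<in> atoms (subst (single_verdict x v) m) \<longleftrightarrow>
        V w \<in> atoms (subst (single_verdict x v) n)"
      using that by (rule closed_eq_verdict_atoms)
    moreover have "w \<noteq> End"
      using that by auto
    ultimately show ?thesis
      by (simp add: atoms_subst_single_verdict)
  qed
  have verdicts: "V w \<in> atoms m \<longleftrightarrow> V w \<in> atoms n" if "w \<in> {Yes, No}" for w
    using probe[OF that, where v = End] that by auto
  show ?thesis
  proof (cases "V Yes \<in> atoms m \<and> V No \<in> atoms m")
    case True
    then show ?thesis using verdicts by blast
  next
    case False
    have vars: "Var x \<in> atoms m \<longleftrightarrow> Var x \<in> atoms n" for x
      using False verdicts probe[where w = Yes and v = Yes and x = x] probe[where w = No and v = No and x = x] by auto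
    have "l \<in> atoms m \<longleftrightarrow> l \<in> atoms n" if "l \<in> atoms m \<union> atoms n" "l \<noteq> V End" for l
    proof (cases l)
      case (V v)
      then show ?thesis
        using that(2) verdicts by (cases v) auto
    next
      case (Var x)
      then show ?thesis
        by (simp add: vars)
    qed (use that(1) atom_is_verdict_or_Var in blast)+
    then show ?thesis by blast
  qed
qed

text \<open>The restriction to a single action is needed for soundness of V1\<open>\<^sub>\<omega>\<close> only; the
  completeness argument works for any action type.\<close>

theorem mainTheorem17:
  fixes a :: 'a and m n :: "'a mon"
  assumes "(UNIV :: 'a set) = {a}"
    and "omega_equiv m n"
  shows "derivable E_omega1' m n"
  using omega_equiv_atoms[OF assms(2)]
proof
  assume "V Yes \<in> atoms m \<and> V No \<in> atoms m \<and> V Yes \<in> atoms n \<and> V No \<in> atoms n"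
  then have "provable m (Plus (V Yes) (V No))" "provable n (Plus (V Yes) (V No))"
    by (simp_all add: provable_Yes_No_if_atoms)
  then show ?thesis by (rule derivable.trans[OF _ derivable.sym])
qed (rule provable_if_atoms_eq)

end
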